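(* Let $(X,d)$ be a compact metric space and $\Omega\subset X$ a nonempty open set. Let $f:\overline\Omega\to\mathbb{R}$ be continuous such that $s[f]:\Omega\to\mathbb{R}$ is continuous with $\inf_\Omega s[f]>0$, and set $\ell:=s[f]$. Then $\partial\Omega\neq\emptyset$ and for every $x\in\Omega$, \[ f(x)=\inf\Big\{\int_0^T\ell(\gamma(s))\,ds+f(\gamma(T)) : T>0,\ \gamma\in\mathrm{Lip}_1([0,T],\overline\Omega),\ \gamma(0)=x,\ \gamma(T)\in\partial\Omega,\ \gamma([0,T))\subset\Omega\Big\}. \] Moreover, for every $x\in\Omega$ there is a $1$-Lipschitz curve $\gamma:[0,T]\to\overline\Omega$ attaining this infimum.
   Context: $\mathrm{Lip}_1([0,T],Y)$ denotes the $1$-Lipschitz curves $[0,T]\to Y$. For a function $u$ on a metric space and a point $\bar x$, the local slope is $s[u](\bar x):=\limsup_{x\to\bar x}\frac{\max\{u(\bar x)-u(x),0\}}{d(\bar x,x)}$ (zero if $\bar x$ is isolated); here $s[f]$ is computed for $f$ on the metric space $\overline\Omega$. Convention $\inf\emptyset=+\infty$. *)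

theory Defs
  imports "HOL-Analysis.Analysis"
begin

definition local_slope :: "('a::metric_space \<Rightarrow> real) \<Rightarrow> 'a set \<Rightarrow> 'a \<Rightarrow> ereal" where
  "local_slope u S xb =
     (if xb islimpt S
      then Limsup (at xb within S) (\<lambda>x. ereal (max (u xb - u x) 0 / dist xb x))
      else 0)"

definition admissible_curves :: "'a::metric_space set \<Rightarrow> 'a \<Rightarrow> (real \<times> (real \<Rightarrow> 'a)) set" where
  "admissible_curves \<Omega> x =
     {(T, \<gamma>). T > 0 \<and> 1-lipschitz_on {0..T} \<gamma> \<and> \<gamma> ` {0..T} \<subseteq> closure \<Omega> \<and>
              \<gamma> 0 = x \<and> \<gamma> T \<in> frontier \<Omega> \<and> \<gamma> ` {0..<T} \<subseteq> \<Omega>}"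

definition curve_cost :: "('a \<Rightarrow> real) \<Rightarrow> ('a \<Rightarrow> real) \<Rightarrow> real \<Rightarrow> (real \<Rightarrow> 'a) \<Rightarrow> ereal" where
  "curve_cost l f T \<gamma> =
     enn2ereal (\<integral>\<^sup>+ s\<in>{0..T}. ennreal (l (\<gamma> s)) \<partial>lborel) + ereal (f (\<gamma> T))"

end

theory Submission
  imports Defs
begin

(* Along an admissible curve the local slope bound gives
   f(gamma s) - f(gamma (s + h)) <= (l(gamma s) + eta) h for small h > 0, and integrating this
   Dini-type inequality yields f x <= cost.  For the converse we run a discrete steepest descent:
   from p, minimise f + c d(p, -) over the ball of radius eps, with c just below inf l on the ball;
   the minimiser cannot be interior, so each step has length eps and lowers f by about c eps.
   As l >= inf l > 0 and f is bounded, these chains leave Omega within a time L independent of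
   eps.  The functions into the compact space X form a compact space (Tychonoff), so the
   interpolated chains have a pointwise cluster point gamma as eps -> 0; it is 1-Lipschitz,
   reaches the complement of Omega by time L, and f decreases along it at rate at least l.
   Stopped at its first exit time, gamma is admissible with cost <= f x. *)

section \<open>Integrating one-sided Dini bounds\<close>

lemma local_right_mono_imp_le:
  fixes \<psi> :: "real \<Rightarrow> real"
  assumes ab: "a \<le> b" and cont: "continuous_on {a..b} \<psi>"
    and local_mono: "\<And>s. s \<in> {a..<b} \<Longrightarrow>
      \<exists>\<rho>>0. \<forall>h. 0 < h \<longrightarrow> h < \<rho> \<longrightarrow> s + h \<le> b \<longrightarrow> \<psi> s \<le> \<psi> (s + h)"
  shows "\<psi> a \<le> \<psi> b"
proof -
  define A where "A = {a..b} \<inter> \<psi> -` {\<psi> a..}"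
  have "closed A" unfolding A_def
    by (rule continuous_closed_preimage[OF cont]) auto
  moreover have "a \<in> A" "bdd_above A" using ab by (auto simp: A_def bdd_above_def)
  ultimately have "Sup A \<in> A" using closed_contains_Sup by blast
  show ?thesis
  proof (cases "Sup A = b")
    case True
    with \<open>Sup A \<in> A\<close> show ?thesis by (auto simp: A_def)
  next
    case False
    with \<open>Sup A \<in> A\<close> have s: "Sup A \<in> {a..<b}" by (auto simp: A_def)
    then obtain \<rho> where \<rho>: "\<rho> > 0" "\<forall>h. 0 < h \<longrightarrow> h < \<rho> \<longrightarrow> Sup A + h \<le> b \<longrightarrow> \<psi> (Sup A) \<le> \<psi> (Sup A + h)"
      using local_mono by blast
    define h where "h = min (\<rho>/2) (b - Sup A)"
    have h: "0 < h" "h < \<rho>" "Sup A + h \<le> b" using \<rho> s by (auto simp: h_def)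
    with \<rho>(2) \<open>Sup A \<in> A\<close> have "Sup A + h \<in> A" by (auto simp: A_def)
    then have "Sup A + h \<le> Sup A" using \<open>bdd_above A\<close> by (rule cSup_upper)
    with h show ?thesis by simp
  qed
qed

lemma integral_le_right_local_bound:
  fixes g :: "real \<Rightarrow> real"
  assumes cont: "continuous_on {a..b} g" and s: "s \<in> {a..<b}" and "\<epsilon> > 0"
  shows "\<exists>\<rho>>0. \<forall>h. 0 < h \<longrightarrow> h < \<rho> \<longrightarrow> s + h \<le> b \<longrightarrow> integral {s..s+h} g \<le> h * (g s + \<epsilon>)"
proof -
  obtain \<rho> where "\<rho> > 0" and \<rho>: "\<forall>y\<in>{a..b}. dist y s < \<rho> \<longrightarrow> dist (g y) (g s) < \<epsilon>"
    using cont s \<open>\<epsilon> > 0\<close> unfolding continuous_on_iff by (metis atLeastAtMost_iff atLeastLessThan_iff less_imp_le)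
  have "integral {s..s+h} g \<le> h * (g s + \<epsilon>)" if h: "0 < h" "h < \<rho>" "s + h \<le> b" for h
  proof -
    have "integral {s..s+h} g \<le> integral {s..s+h} (\<lambda>_. g s + \<epsilon>)"
    proof (rule integral_le)
      show "g integrable_on {s..s+h}"
        using integrable_continuous_real[OF cont] integrable_subinterval_real s h by fastforce
      fix y assume "y \<in> {s..s+h}"
      then have "dist (g y) (g s) < \<epsilon>" using \<rho> h s by (auto simp: dist_real_def)
      then show "g y \<le> g s + \<epsilon>" unfolding dist_real_def by linarith
    qed (rule integrable_const_ivl)
    with h show ?thesis by simp
  qed
  with \<open>\<rho> > 0\<close> show ?thesis by blast
qed

text \<open>The slack \<open>\<eta>\<close> is absorbed by showing that \<open>\<phi> u - \<integral>\<^sub>a\<^sup>u g + \<epsilon> (u - a)\<close> is nondecreasing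
  for every \<open>\<epsilon> > 0\<close>.\<close>
lemma integral_le_if_right_Dini:
  fixes \<phi> g :: "real \<Rightarrow> real"
  assumes ab: "a \<le> b" and cont_\<phi>: "continuous_on {a..b} \<phi>" and cont_g: "continuous_on {a..b} g"
    and Dini: "\<And>s \<eta>. s \<in> {a..<b} \<Longrightarrow> \<eta> > 0 \<Longrightarrow>
      \<exists>\<rho>>0. \<forall>h. 0 < h \<longrightarrow> h < \<rho> \<longrightarrow> s + h \<le> b \<longrightarrow> h * (g s - \<eta>) \<le> \<phi> (s + h) - \<phi> s"
  shows "integral {a..b} g \<le> \<phi> b - \<phi> a"
proof -
  have slack: "\<phi> a \<le> \<phi> b - integral {a..b} g + \<epsilon> * (b - a)" if \<epsilon>: "\<epsilon> > 0" for \<epsilon>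
  proof -
    define \<psi> where "\<psi> u = \<phi> u - integral {a..u} g + \<epsilon> * (u - a)" for u
    have "continuous_on {a..b} (\<lambda>u. integral {a..u} g)"
      by (rule indefinite_integral_continuous_1[OF integrable_continuous_real[OF cont_g]])
    then have cont_\<psi>: "continuous_on {a..b} \<psi>" unfolding \<psi>_def
      by (intro continuous_intros cont_\<phi>)
    have "\<psi> a \<le> \<psi> b"
    proof (rule local_right_mono_imp_le[OF ab cont_\<psi>])
      fix s assume s: "s \<in> {a..<b}"
      obtain \<rho>1 where "\<rho>1 > 0" and \<rho>1:
        "\<forall>h. 0 < h \<longrightarrow> h < \<rho>1 \<longrightarrow> s + h \<le> b \<longrightarrow> h * (g s - \<epsilon>/2) \<le> \<phi> (s + h) - \<phi> s"
        using Dini[OF s, of "\<epsilon>/2"] \<epsilon> by auto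
      obtain \<rho>2 where "\<rho>2 > 0" and \<rho>2:
        "\<forall>h. 0 < h \<longrightarrow> h < \<rho>2 \<longrightarrow> s + h \<le> b \<longrightarrow> integral {s..s+h} g \<le> h * (g s + \<epsilon>/2)"
        using integral_le_right_local_bound[OF cont_g s, of "\<epsilon>/2"] \<epsilon> by auto
      have "\<psi> s \<le> \<psi> (s + h)" if h: "0 < h" "h < min \<rho>1 \<rho>2" "s + h \<le> b" for h
      proof -
        have "g integrable_on {a..s+h}"
          using integrable_continuous_real[OF cont_g] integrable_subinterval_real s h by fastforce
        then have split: "integral {a..s+h} g = integral {a..s} g + integral {s..s+h} g"
          using Henstock_Kurzweil_Integration.integral_combine[where a=a and c=s and b="s+h" and f=g] s h
          by auto
        have "h * (g s - \<epsilon>/2) \<le> \<phi> (s + h) - \<phi> s" "integral {s..s+h} g \<le> h * (g s + \<epsilon>/2)"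
          using \<rho>1 \<rho>2 h by auto
        moreover have "h * (g s + \<epsilon>/2) = h * (g s - \<epsilon>/2) + \<epsilon> * h" by (simp add: algebra_simps)
        moreover have "\<psi> (s + h) - \<psi> s = \<phi> (s + h) - \<phi> s - integral {s..s+h} g + \<epsilon> * h"
          unfolding \<psi>_def split by (simp add: algebra_simps)
        ultimately show ?thesis by linarith
      qed
      with \<open>\<rho>1 > 0\<close> \<open>\<rho>2 > 0\<close>
      show "\<exists>\<rho>>0. \<forall>h. 0 < h \<longrightarrow> h < \<rho> \<longrightarrow> s + h \<le> b \<longrightarrow> \<psi> s \<le> \<psi> (s + h)"
        by (intro exI[of _ "min \<rho>1 \<rho>2"]) auto
    qed
    then show ?thesis by (simp add: \<psi>_def)
  qed
  show ?thesis
  proof (rule field_le_epsilon)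
    fix e :: real assume e: "0 < e"
    have "(e/(b-a+1)) * (b - a) \<le> e" using e ab by (simp add: field_simps)
    then show "integral {a..b} g \<le> \<phi> b - \<phi> a + e"
      using slack[of "e/(b-a+1)"] e ab by simp
  qed
qed

lemma nn_integral_eq_integral_continuous:
  fixes g :: "real \<Rightarrow> real"
  assumes "continuous_on {a..b} g" "\<And>s. s \<in> {a..b} \<Longrightarrow> 0 \<le> g s"
  shows "(\<integral>\<^sup>+ s\<in>{a..b}. ennreal (g s) \<partial>lborel) = ennreal (integral {a..b} g)"
  using nn_integral_has_integral_lebesgue'[of "{a..b}" g] integrable_continuous_real[OF assms(1)] assms(2)
  by (simp add: integrable_integral)

lemma nn_integral_Ico_le_SUP_Icc:
  fixes u :: "real \<Rightarrow> ennreal"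
  assumes T: "T > 0"
    and meas: "\<And>t. t \<in> {0..<T} \<Longrightarrow> (\<lambda>s. u s * indicator {0..t} s) \<in> borel_measurable lborel"
  shows "(\<integral>\<^sup>+ s. u s * indicator {0..<T} s \<partial>lborel) \<le> (SUP t\<in>{0..<T}. \<integral>\<^sup>+ s. u s * indicator {0..t} s \<partial>lborel)"
proof -
  define t where "t k = T - T / (real k + 2)" for k :: nat
  have t: "t k \<in> {0..<T}" for k
    using T by (auto simp: t_def field_simps)
  have t_mono: "mono t"
    using T unfolding mono_def t_def by (auto intro!: diff_left_mono divide_left_mono)
  define U where "U k s = u s * indicator {0..t k} s" for k s
  have "incseq U"
    unfolding incseq_def le_fun_def U_def
  proof (intro allI impI)
    fix m n :: nat and s assume "m \<le> n"
    then have "t m \<le> t n" by (rule monoD[OF t_mono])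
    then show "u s * indicator {0..t m} s \<le> u s * indicator {0..t n} s"
      by (intro mult_left_mono) (auto simp: indicator_def)
  qed
  moreover have "U k \<in> borel_measurable lborel" for k
    unfolding U_def using meas[OF t[of k]] .
  ultimately have monconv: "(\<integral>\<^sup>+ s. (SUP k. U k s) \<partial>lborel) = (SUP k. integral\<^sup>N lborel (U k))"
    by (rule nn_integral_monotone_convergence_SUP)
  have SUP_U: "(SUP k. U k s) = u s * indicator {0..<T} s" for s
  proof (cases "s \<in> {0..<T}")
    case True
    obtain k :: nat where k: "T / (T - s) < real k" using reals_Archimedean2 by blast
    with True have "T \<le> (real k + 2) * (T - s)" by (simp add: field_simps)
    with True have "s \<in> {0..t k}" by (auto simp: t_def field_simps)
    with True show ?thesis
      by (intro antisym SUP_least SUP_upper2[of k]) (auto simp: U_def indicator_def)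
  next
    case False
    then have "s \<notin> {0..t k}" for k using t[of k] by auto
    with False show ?thesis by (simp add: U_def)
  qed
  have "(\<integral>\<^sup>+ s. u s * indicator {0..<T} s \<partial>lborel) = (SUP k. integral\<^sup>N lborel (U k))"
    by (simp add: SUP_U flip: monconv)
  also have "\<dots> \<le> (SUP t\<in>{0..<T}. \<integral>\<^sup>+ s. u s * indicator {0..t} s \<partial>lborel)"
    unfolding U_def using t by (intro SUP_least SUP_upper) auto
  finally show ?thesis .
qed

lemma nn_integral_Icc_le_if_partial_integrals_le:
  fixes g :: "real \<Rightarrow> real"
  assumes T: "T > 0"
    and cont: "\<And>t. t \<in> {0..<T} \<Longrightarrow> continuous_on {0..t} g"
    and nonneg: "\<And>s. s \<in> {0..<T} \<Longrightarrow> 0 \<le> g s"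
    and partial: "\<And>t. t \<in> {0..<T} \<Longrightarrow> integral {0..t} g \<le> V"
  shows "(\<integral>\<^sup>+ s\<in>{0..T}. ennreal (g s) \<partial>lborel) \<le> ennreal V"
proof -
  have meas: "(\<lambda>s. ennreal (g s) * indicator {0..t} s) \<in> borel_measurable lborel" if "t \<in> {0..<T}" for t
  proof -
    have "(\<lambda>s. indicator {0..t} s *\<^sub>R g s) \<in> borel_measurable borel"
      by (rule borel_measurable_continuous_on_indicator) (use cont[OF that] in auto)
    then have "(\<lambda>s. ennreal (indicator {0..t} s *\<^sub>R g s)) \<in> borel_measurable borel"
      by measurable
    moreover have "(\<lambda>s. ennreal (indicator {0..t} s *\<^sub>R g s)) = (\<lambda>s. ennreal (g s) * indicator {0..t} s)"
      by (auto simp: indicator_def fun_eq_iff)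
    ultimately show ?thesis by simp
  qed
  have "(\<integral>\<^sup>+ s\<in>{0..T}. ennreal (g s) \<partial>lborel) = (\<integral>\<^sup>+ s. ennreal (g s) * indicator {0..<T} s \<partial>lborel)"
    using AE_lborel_singleton[of T]
    by (intro nn_integral_cong_AE) (auto elim!: eventually_mono simp: indicator_def)
  also have "\<dots> \<le> (SUP t\<in>{0..<T}. \<integral>\<^sup>+ s\<in>{0..t}. ennreal (g s) \<partial>lborel)"
    using nn_integral_Ico_le_SUP_Icc[OF T meas] by simp
  also have "\<dots> \<le> ennreal V"
  proof (rule SUP_least)
    fix t assume t: "t \<in> {0..<T}"
    then have "(\<integral>\<^sup>+ s\<in>{0..t}. ennreal (g s) \<partial>lborel) = ennreal (integral {0..t} g)"
      using cont nonneg by (intro nn_integral_eq_integral_continuous) auto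
    then show "(\<integral>\<^sup>+ s\<in>{0..t}. ennreal (g s) \<partial>lborel) \<le> ennreal V"
      using partial[OF t] by (simp add: ennreal_leI)
  qed
  finally show ?thesis .
qed

lemma nn_integral_le_if_right_Dini:
  fixes \<phi> g :: "real \<Rightarrow> real"
  assumes T: "T > 0" and cont_\<phi>: "continuous_on {0..T} \<phi>"
    and cont_g: "\<And>t. t \<in> {0..<T} \<Longrightarrow> continuous_on {0..t} g"
    and nonneg: "\<And>s. s \<in> {0..<T} \<Longrightarrow> 0 \<le> g s"
    and Dini: "\<And>s \<eta>. s \<in> {0..<T} \<Longrightarrow> \<eta> > 0 \<Longrightarrow>
      \<exists>\<rho>>0. \<forall>h. 0 < h \<longrightarrow> h < \<rho> \<longrightarrow> s + h \<le> T \<longrightarrow> h * (g s - \<eta>) \<le> \<phi> (s + h) - \<phi> s"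
  shows "enn2ereal (\<integral>\<^sup>+ s\<in>{0..T}. ennreal (g s) \<partial>lborel) \<le> ereal (\<phi> T - \<phi> 0)"
proof -
  have partial: "integral {0..t} g \<le> \<phi> T - \<phi> 0" if t: "t \<in> {0..<T}" for t
  proof -
    have "integral {0..t} g \<le> \<phi> t - \<phi> 0"
    proof (rule integral_le_if_right_Dini)
      show "continuous_on {0..t} \<phi>" using t by (intro continuous_on_subset[OF cont_\<phi>]) auto
      fix s \<eta> :: real assume "s \<in> {0..<t}" "\<eta> > 0"
      then show "\<exists>\<rho>>0. \<forall>h. 0 < h \<longrightarrow> h < \<rho> \<longrightarrow> s + h \<le> t \<longrightarrow> h * (g s - \<eta>) \<le> \<phi> (s + h) - \<phi> s"
        using Dini[of s \<eta>] t by (fastforce elim!: ex_forward)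
    qed (use t cont_g in auto)
    moreover have "integral {t..T} (\<lambda>_. 0) \<le> \<phi> T - \<phi> t"
    proof (rule integral_le_if_right_Dini)
      show "continuous_on {t..T} \<phi>" using t by (intro continuous_on_subset[OF cont_\<phi>]) auto
      fix s \<eta> :: real assume s: "s \<in> {t..<T}" and "\<eta> > 0"
      then obtain \<rho> where "\<rho> > 0"
        "\<forall>h. 0 < h \<longrightarrow> h < \<rho> \<longrightarrow> s + h \<le> T \<longrightarrow> h * (g s - \<eta>) \<le> \<phi> (s + h) - \<phi> s"
        using Dini[of s \<eta>] t by auto
      moreover have "h * (0 - \<eta>) \<le> h * (g s - \<eta>)" if "h > 0" for h
        using nonneg[of s] s t that by (auto simp: algebra_simps)
      ultimately show "\<exists>\<rho>>0. \<forall>h. 0 < h \<longrightarrow> h < \<rho> \<longrightarrow> s + h \<le> T \<longrightarrow> h * (0 - \<eta>) \<le> \<phi> (s + h) - \<phi> s"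
        by (meson order_trans)
    qed (use t in auto)
    ultimately show ?thesis by simp
  qed
  have "integral {0..0} g \<le> \<phi> T - \<phi> 0" using partial[of 0] T by simp
  then have "0 \<le> \<phi> T - \<phi> 0" by simp
  moreover have "(\<integral>\<^sup>+ s\<in>{0..T}. ennreal (g s) \<partial>lborel) \<le> ennreal (\<phi> T - \<phi> 0)"
    using nn_integral_Icc_le_if_partial_integrals_le[OF T cont_g nonneg partial] by blast
  ultimately show ?thesis by (metis enn2ereal_ennreal less_eq_ennreal.rep_eq)
qed

lemma nn_integral_ge_if_right_Dini:
  fixes \<phi> g :: "real \<Rightarrow> real"
  assumes T: "T > 0" and cont_\<phi>: "continuous_on {0..T} \<phi>"
    and cont_g: "\<And>t. t \<in> {0..<T} \<Longrightarrow> continuous_on {0..t} g"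
    and nonneg: "\<And>s. s \<in> {0..<T} \<Longrightarrow> 0 \<le> g s"
    and Dini: "\<And>s \<eta>. s \<in> {0..<T} \<Longrightarrow> \<eta> > 0 \<Longrightarrow>
      \<exists>\<rho>>0. \<forall>h. 0 < h \<longrightarrow> h < \<rho> \<longrightarrow> s + h \<le> T \<longrightarrow> \<phi> (s + h) - \<phi> s \<le> h * (g s + \<eta>)"
  shows "ereal (\<phi> T - \<phi> 0) \<le> enn2ereal (\<integral>\<^sup>+ s\<in>{0..T}. ennreal (g s) \<partial>lborel)"
proof -
  define I where "I = (\<integral>\<^sup>+ s\<in>{0..T}. ennreal (g s) \<partial>lborel)"
  have partial: "ennreal (\<phi> t - \<phi> 0) \<le> I" if t: "t \<in> {0..<T}" for t
  proof -
    have "integral {0..t} (\<lambda>s. - g s) \<le> (- \<phi> t) - (- \<phi> 0)"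
    proof (rule integral_le_if_right_Dini)
      show "continuous_on {0..t} (\<lambda>s. - \<phi> s)"
        using t by (intro continuous_intros continuous_on_subset[OF cont_\<phi>]) auto
      fix s \<eta> :: real assume "s \<in> {0..<t}" "\<eta> > 0"
      then show "\<exists>\<rho>>0. \<forall>h. 0 < h \<longrightarrow> h < \<rho> \<longrightarrow> s + h \<le> t \<longrightarrow> h * (- g s - \<eta>) \<le> - \<phi> (s + h) - - \<phi> s"
        using Dini[of s \<eta>] t by (fastforce simp: algebra_simps elim!: ex_forward)
    qed (use t cont_g in \<open>auto intro: continuous_intros\<close>)
    then have "\<phi> t - \<phi> 0 \<le> integral {0..t} g" by (simp add: integral_neg)
    then have "ennreal (\<phi> t - \<phi> 0) \<le> (\<integral>\<^sup>+ s\<in>{0..t}. ennreal (g s) \<partial>lborel)"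
      using t cont_g nonneg by (subst nn_integral_eq_integral_continuous) (auto intro: ennreal_leI)
    also have "\<dots> \<le> I" unfolding I_def
      using t by (intro nn_integral_mono) (auto simp: indicator_def)
    finally show ?thesis .
  qed
  show ?thesis
  proof (cases I rule: ennreal_cases)
    case (real r)
    have "\<phi> T - \<phi> 0 \<le> r"
    proof (rule continuous_le_on_closure[where S="{0..<T}" and f="\<lambda>t. \<phi> t - \<phi> 0"])
      fix t assume "t \<in> {0..<T}"
      then show "\<phi> t - \<phi> 0 \<le> r" using partial real by (fastforce simp: ennreal_le_iff2)
    qed (use T cont_\<phi> in \<open>auto intro: continuous_intros\<close>)
    then show ?thesis using real by (simp add: I_def)
  qed (simp add: I_def)
qed

lemma local_slope_nonneg: "0 \<le> local_slope u S p"
proof (cases "p islimpt S")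
  case True
  then have "at p within S \<noteq> bot" by (simp add: trivial_limit_within)
  then have "0 \<le> Limsup (at p within S) (\<lambda>x. ereal (max (u p - u x) 0 / dist p x))"
    by (rule le_Limsup) simp
  with True show ?thesis by (simp add: local_slope_def)
qed (simp add: local_slope_def)

lemma local_slope_less_imp_local_bound:
  assumes "local_slope u S p < ereal c"
  shows "\<exists>\<rho>>0. \<forall>y\<in>S. dist y p < \<rho> \<longrightarrow> u p - u y \<le> c * dist p y"
proof (cases "p islimpt S")
  case True
  with assms have "Limsup (at p within S) (\<lambda>x. ereal (max (u p - u x) 0 / dist p x)) < ereal c"
    by (simp add: local_slope_def)
  then have "eventually (\<lambda>x. ereal (max (u p - u x) 0 / dist p x) < ereal c) (at p within S)"
    by (rule Limsup_lessD)
  then obtain \<rho> where \<rho>: "\<rho> > 0" "\<forall>y\<in>S. y \<noteq> p \<and> dist y p < \<rho> \<longrightarrow> max (u p - u y) 0 / dist p y < c"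
    unfolding eventually_at by auto
  have "u p - u y \<le> c * dist p y" if "y \<in> S" "dist y p < \<rho>" for y
  proof (cases "y = p")
    case False
    then have "max (u p - u y) 0 / dist p y < c" using \<rho> that by auto
    then have "max (u p - u y) 0 < c * dist p y" using False by (simp add: divide_less_eq)
    then show ?thesis by linarith
  qed simp
  with \<rho>(1) show ?thesis by blast
next
  case False
  then obtain \<rho> where "\<rho> > 0" "\<forall>y\<in>S. y \<noteq> p \<longrightarrow> \<rho> \<le> dist y p"
    unfolding islimpt_approachable by (auto simp: not_less)
  then show ?thesis by (intro exI[of _ \<rho>]) (auto simp: not_less)
qed

lemma local_slope_le_if_local_bound:
  assumes "c \<ge> 0" "\<rho> > 0" "\<forall>y\<in>S. dist y p < \<rho> \<longrightarrow> u p - u y \<le> c * dist p y"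
  shows "local_slope u S p \<le> ereal c"
proof (cases "p islimpt S")
  case True
  have "eventually (\<lambda>x. ereal (max (u p - u x) 0 / dist p x) \<le> ereal c) (at p within S)"
    unfolding eventually_at
  proof (intro exI[of _ \<rho>] conjI ballI impI)
    fix y assume y: "y \<in> S" "y \<noteq> p \<and> dist y p < \<rho>"
    then have "dist p y > 0" by auto
    moreover have "max (u p - u y) 0 \<le> c * dist p y" using assms y \<open>dist p y > 0\<close> by auto
    ultimately show "ereal (max (u p - u y) 0 / dist p y) \<le> ereal c" by (simp add: divide_le_eq)
  qed (use assms in auto)
  then have "Limsup (at p within S) (\<lambda>x. ereal (max (u p - u x) 0 / dist p x)) \<le> ereal c"
    by (rule Limsup_bounded)
  with True show ?thesis by (simp add: local_slope_def)
qed (use assms in \<open>simp add: local_slope_def\<close>)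

text \<open>A minimiser of \<open>f + c \<cdot> d(p, \<cdot>)\<close> on the ball cannot be interior, since there the slope of
  \<open>f\<close> would be at most \<open>c\<close>.\<close>
lemma descent_on_sphere_if_slope_gt:
  assumes cont: "continuous_on S f" and r: "r > 0" and ball: "cball p r \<subseteq> S"
    and compact: "compact (cball p r)" and c: "c \<ge> 0"
    and slope: "\<And>y. y \<in> cball p r \<Longrightarrow> ereal c < local_slope f S y"
  shows "\<exists>q. dist p q = r \<and> c * r \<le> f p - f q"
proof -
  have "continuous_on (cball p r) f" using cont ball by (rule continuous_on_subset)
  then have "continuous_on (cball p r) (\<lambda>y. f y + c * dist p y)" by (intro continuous_intros)
  moreover have "cball p r \<noteq> {}" using r by simp
  ultimately obtain y where y: "y \<in> cball p r"
    and min: "\<forall>z\<in>cball p r. f y + c * dist p y \<le> f z + c * dist p z"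
    using continuous_attains_inf[OF compact] by blast
  show ?thesis
  proof (cases "dist p y < r")
    case True
    have "local_slope f S y \<le> ereal c"
    proof (rule local_slope_le_if_local_bound[OF c])
      show "0 < r - dist p y" using True by simp
      show "\<forall>z\<in>S. dist z y < r - dist p y \<longrightarrow> f y - f z \<le> c * dist y z"
      proof (intro ballI impI)
        fix z assume "z \<in> S" "dist z y < r - dist p y"
        moreover have triangle: "dist p z \<le> dist p y + dist y z" by (rule dist_triangle)
        ultimately have "f y + c * dist p y \<le> f z + c * dist p z"
          using min by (auto simp: dist_commute)
        moreover have "c * dist p z \<le> c * dist p y + c * dist y z"
          using triangle c by (metis distrib_left mult_left_mono)
        ultimately show "f y - f z \<le> c * dist y z" by linarith
      qed
    qed
    with slope[OF y] show ?thesis by simp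
  next
    case False
    with y have "dist p y = r" by simp
    moreover have "f y + c * dist p y \<le> f p + c * dist p p" using min[rule_format, of p] r by simp
    ultimately show ?thesis by (intro exI[of _ y]) auto
  qed
qed

lemma first_exit_time:
  fixes \<gamma> :: "real \<Rightarrow> 'a::topological_space"
  assumes cont: "continuous_on {0..L} \<gamma>" and "open \<Omega>" "0 \<le> L" "\<gamma> 0 \<in> \<Omega>" "\<gamma> L \<notin> \<Omega>"
  shows "\<exists>T\<in>{0<..L}. \<gamma> T \<notin> \<Omega> \<and> \<gamma> ` {0..<T} \<subseteq> \<Omega>"
proof -
  define A where "A = {0..L} \<inter> \<gamma> -` (- \<Omega>)"
  have "closed A" unfolding A_def
    using \<open>open \<Omega>\<close> by (intro continuous_closed_preimage[OF cont]) auto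
  moreover have "L \<in> A" "bdd_below A" using assms by (auto simp: A_def bdd_below_def)
  ultimately have "Inf A \<in> A" using closed_contains_Inf by blast
  moreover have "\<gamma> s \<in> \<Omega>" if "s \<in> {0..<Inf A}" for s
    using that cInf_lower[OF _ \<open>bdd_below A\<close>, of s] \<open>Inf A \<in> A\<close> by (force simp: A_def)
  moreover have "Inf A \<noteq> 0" using \<open>Inf A \<in> A\<close> \<open>\<gamma> 0 \<in> \<Omega>\<close> by (auto simp: A_def)
  ultimately show ?thesis by (intro bexI[of _ "Inf A"]) (auto simp: A_def)
qed

lemma compact_imp_pointwise_cluster_point:
  fixes \<Gamma> :: "nat \<Rightarrow> 'b \<Rightarrow> 'a::metric_space"
  assumes "compact (UNIV :: 'a set)"
  shows "\<exists>\<gamma>. \<forall>F \<delta>. finite F \<longrightarrow> \<delta> > 0 \<longrightarrow> (\<exists>\<^sub>F n in sequentially. \<forall>t\<in>F. dist (\<Gamma> n t) (\<gamma> t) < \<delta>)"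
proof -
  have "compact_space (euclidean :: 'a topology)" using assms
    by (simp add: compact_space_def)
  then have "compact_space (product_topology (\<lambda>i::'b. euclidean :: 'a topology) UNIV)"
    by (simp add: compact_space_product_topology)
  then have "compact (UNIV :: ('b \<Rightarrow> 'a) set)"
    by (simp add: euclidean_product_topology compact_space_def)
  moreover have "filtermap \<Gamma> sequentially \<noteq> bot" by (simp add: filtermap_bot_iff)
  ultimately obtain \<gamma> where \<gamma>: "inf (nhds \<gamma>) (filtermap \<Gamma> sequentially) \<noteq> bot"
    using compact_filter[THEN iffD1, rule_format] by fastforce
  have "\<exists>\<^sub>F n in sequentially. \<forall>t\<in>F. dist (\<Gamma> n t) (\<gamma> t) < \<delta>" if "finite F" "\<delta> > 0" for F \<delta>
  proof (rule ccontr)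
    define U where "U = (\<Inter>t\<in>F. (\<lambda>g. g t) -` ball (\<gamma> t) \<delta>)"
    have "continuous_on UNIV (\<lambda>g::'b \<Rightarrow> 'a. g t)" for t by simp
    then have "open U" unfolding U_def
      using \<open>finite F\<close> by (intro open_INT ballI open_vimage open_ball)
    with \<open>\<delta> > 0\<close> have "eventually (\<lambda>g. g \<in> U) (nhds \<gamma>)"
      by (intro eventually_nhds_in_open) (auto simp: U_def)
    moreover assume "\<not> (\<exists>\<^sub>F n in sequentially. \<forall>t\<in>F. dist (\<Gamma> n t) (\<gamma> t) < \<delta>)"
    then have "eventually (\<lambda>g. g \<notin> U) (filtermap \<Gamma> sequentially)"
      by (simp add: not_frequently eventually_filtermap U_def dist_commute)
    ultimately have "eventually (\<lambda>_. False) (inf (nhds \<gamma>) (filtermap \<Gamma> sequentially))"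
      unfolding eventually_inf by blast
    with \<gamma> show False by (simp add: eventually_False)
  qed
  then show ?thesis by blast
qed

lemma admissible_curve_continuous_on_closure:
  assumes "(T, \<gamma>) \<in> admissible_curves \<Omega> x" and cont_f: "continuous_on (closure \<Omega>) f"
  shows "continuous_on {0..T} (\<lambda>s. f (\<gamma> s))"
proof -
  from assms(1) have cont: "continuous_on {0..T} \<gamma>" and "\<gamma> ` {0..T} \<subseteq> closure \<Omega>"
    by (auto simp: admissible_curves_def intro: lipschitz_on_continuous_on)
  then show ?thesis by (intro continuous_on_compose2[OF cont_f cont])
qed

lemma admissible_curve_continuous_on_inside:
  assumes "(T, \<gamma>) \<in> admissible_curves \<Omega> x" and cont_l: "continuous_on \<Omega> l" and "t \<in> {0..<T}"
  shows "continuous_on {0..t} (\<lambda>s. l (\<gamma> s))"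
proof -
  from assms(1) have cont: "continuous_on {0..T} \<gamma>" and "\<gamma> ` {0..<T} \<subseteq> \<Omega>"
    by (auto simp: admissible_curves_def intro: lipschitz_on_continuous_on)
  with \<open>t \<in> {0..<T}\<close> show ?thesis
    by (intro continuous_on_compose2[OF cont_l continuous_on_subset[OF cont]]) auto
qed

lemma le_curve_cost:
  fixes \<Omega> :: "'a::metric_space set"
  assumes cont_f: "continuous_on (closure \<Omega>) f"
    and slope: "\<forall>x\<in>\<Omega>. local_slope f (closure \<Omega>) x = ereal (l x)"
    and cont_l: "continuous_on \<Omega> l"
    and adm: "(T, \<gamma>) \<in> admissible_curves \<Omega> x"
  shows "ereal (f x) \<le> curve_cost l f T \<gamma>"
proof -
  from adm have T: "T > 0" and lip: "1-lipschitz_on {0..T} \<gamma>" and "\<gamma> 0 = x"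
    and closure: "\<gamma> ` {0..T} \<subseteq> closure \<Omega>" and inside: "\<gamma> ` {0..<T} \<subseteq> \<Omega>"
    by (auto simp: admissible_curves_def)
  have l_nonneg: "0 \<le> l y" if "y \<in> \<Omega>" for y
    using local_slope_nonneg[of f "closure \<Omega>" y] slope that by auto
  have bound: "ereal ((- f (\<gamma> T)) - (- f (\<gamma> 0))) \<le> enn2ereal (\<integral>\<^sup>+ s\<in>{0..T}. ennreal (l (\<gamma> s)) \<partial>lborel)"
  proof (rule nn_integral_ge_if_right_Dini[OF T])
    show "continuous_on {0..T} (\<lambda>s. - f (\<gamma> s))"
      using admissible_curve_continuous_on_closure[OF adm cont_f] by (rule continuous_on_minus)
    show "continuous_on {0..t} (\<lambda>s. l (\<gamma> s))" if "t \<in> {0..<T}" for t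
      using admissible_curve_continuous_on_inside[OF adm cont_l that] .
    show "0 \<le> l (\<gamma> s)" if "s \<in> {0..<T}" for s
      using that inside by (intro l_nonneg) auto
    fix s \<eta> :: real assume s: "s \<in> {0..<T}" and "\<eta> > 0"
    from s inside have "\<gamma> s \<in> \<Omega>" by auto
    with slope \<open>\<eta> > 0\<close> have "local_slope f (closure \<Omega>) (\<gamma> s) < ereal (l (\<gamma> s) + \<eta>)" by simp
    then obtain \<rho> where \<rho>: "\<rho> > 0"
      "\<forall>y\<in>closure \<Omega>. dist y (\<gamma> s) < \<rho> \<longrightarrow> f (\<gamma> s) - f y \<le> (l (\<gamma> s) + \<eta>) * dist (\<gamma> s) y"
      using local_slope_less_imp_local_bound by blast
    show "\<exists>\<rho>>0. \<forall>h. 0 < h \<longrightarrow> h < \<rho> \<longrightarrow> s + h \<le> T \<longrightarrow>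
        - f (\<gamma> (s + h)) - - f (\<gamma> s) \<le> h * (l (\<gamma> s) + \<eta>)"
    proof (intro exI[of _ \<rho>] conjI allI impI)
      fix h assume h: "0 < h" "h < \<rho>" "s + h \<le> T"
      with s lip have step: "dist (\<gamma> s) (\<gamma> (s + h)) \<le> h"
        using lipschitz_onD[OF lip, of s "s + h"] by (auto simp: dist_real_def)
      moreover have "\<gamma> (s + h) \<in> closure \<Omega>" using closure s h by auto
      moreover have "dist (\<gamma> (s + h)) (\<gamma> s) < \<rho>" using step h by (simp add: dist_commute)
      ultimately have "f (\<gamma> s) - f (\<gamma> (s + h)) \<le> (l (\<gamma> s) + \<eta>) * dist (\<gamma> s) (\<gamma> (s + h))"
        using \<rho>(2) by blast
      also have "\<dots> \<le> (l (\<gamma> s) + \<eta>) * h"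
        using step l_nonneg[OF \<open>\<gamma> s \<in> \<Omega>\<close>] \<open>\<eta> > 0\<close> by (intro mult_left_mono) auto
      finally show "- f (\<gamma> (s + h)) - - f (\<gamma> s) \<le> h * (l (\<gamma> s) + \<eta>)" by (simp add: algebra_simps)
    qed (use \<rho> in simp)
  qed
  have "ereal (f x) = ereal ((- f (\<gamma> T)) - (- f (\<gamma> 0))) + ereal (f (\<gamma> T))"
    using \<open>\<gamma> 0 = x\<close> by simp
  also have "\<dots> \<le> curve_cost l f T \<gamma>"
    unfolding curve_cost_def using bound by (rule add_right_mono)
  finally show ?thesis .
qed

lemma curve_cost_le_if_descent_rate:
  fixes \<Omega> :: "'a::metric_space set"
  assumes cont_f: "continuous_on (closure \<Omega>) f" and cont_l: "continuous_on \<Omega> l"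
    and l_nonneg: "\<And>y. y \<in> \<Omega> \<Longrightarrow> 0 \<le> l y"
    and adm: "(T, \<gamma>) \<in> admissible_curves \<Omega> x"
    and rate: "\<And>s \<eta>. s \<in> {0..<T} \<Longrightarrow> \<eta> > 0 \<Longrightarrow>
      \<exists>\<rho>>0. \<forall>h. 0 < h \<longrightarrow> h < \<rho> \<longrightarrow> h * (l (\<gamma> s) - \<eta>) \<le> f (\<gamma> s) - f (\<gamma> (s + h))"
  shows "curve_cost l f T \<gamma> \<le> ereal (f x)"
proof -
  from adm have T: "T > 0" and "\<gamma> 0 = x" and inside: "\<gamma> ` {0..<T} \<subseteq> \<Omega>"
    by (auto simp: admissible_curves_def)
  have bound: "enn2ereal (\<integral>\<^sup>+ s\<in>{0..T}. ennreal (l (\<gamma> s)) \<partial>lborel) \<le> ereal ((- f (\<gamma> T)) - (- f (\<gamma> 0)))"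
  proof (rule nn_integral_le_if_right_Dini[OF T])
    show "continuous_on {0..T} (\<lambda>s. - f (\<gamma> s))"
      using admissible_curve_continuous_on_closure[OF adm cont_f] by (rule continuous_on_minus)
    show "continuous_on {0..t} (\<lambda>s. l (\<gamma> s))" if "t \<in> {0..<T}" for t
      using admissible_curve_continuous_on_inside[OF adm cont_l that] .
    show "0 \<le> l (\<gamma> s)" if "s \<in> {0..<T}" for s
      using that inside by (intro l_nonneg) auto
    fix s \<eta> :: real assume "s \<in> {0..<T}" "\<eta> > 0"
    then show "\<exists>\<rho>>0. \<forall>h. 0 < h \<longrightarrow> h < \<rho> \<longrightarrow> s + h \<le> T \<longrightarrow>
        h * (l (\<gamma> s) - \<eta>) \<le> - f (\<gamma> (s + h)) - - f (\<gamma> s)"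
      using rate[of s \<eta>] by (fastforce elim!: ex_forward)
  qed
  have "curve_cost l f T \<gamma> \<le> ereal ((- f (\<gamma> T)) - (- f (\<gamma> 0))) + ereal (f (\<gamma> T))"
    unfolding curve_cost_def using bound by (rule add_right_mono)
  also have "\<dots> = ereal (f x)" using \<open>\<gamma> 0 = x\<close> by simp
  finally show ?thesis .
qed

section \<open>Discrete steepest descent\<close>

definition mesh :: "nat \<Rightarrow> real" where
  "mesh n = 1 / (real n + 2)"

lemma mesh_pos: "0 < mesh n" and mesh_le_half: "mesh n \<le> 1/2"
  by (auto simp: mesh_def field_simps)

lemma mesh_less_1: "mesh n < 1"
  using mesh_le_half[of n] by simp

lemma eventually_mesh_less:
  assumes "\<delta> > 0"
  shows "eventually (\<lambda>n. mesh n < \<delta>) sequentially"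
  unfolding eventually_sequentially
proof (intro exI allI impI)
  fix n assume "nat \<lceil>1 / \<delta>\<rceil> \<le> n"
  then have "1 / \<delta> < real n + 2" by linarith
  with assms show "mesh n < \<delta>" by (simp add: mesh_def field_simps)
qed

lemma nat_floor_divide_add:
  fixes s h \<epsilon> :: real
  assumes s: "0 \<le> s" and h: "0 \<le> h" and \<epsilon>: "0 < \<epsilon>"
  obtains k where "nat \<lfloor>(s + h) / \<epsilon>\<rfloor> = nat \<lfloor>s / \<epsilon>\<rfloor> + k" "h - \<epsilon> \<le> real k * \<epsilon>" "real k * \<epsilon> \<le> h + \<epsilon>"
proof
  define k where "k = nat \<lfloor>(s + h) / \<epsilon>\<rfloor> - nat \<lfloor>s / \<epsilon>\<rfloor>"
  have "s / \<epsilon> \<le> (s + h) / \<epsilon>" using h \<epsilon> by (simp add: divide_right_mono)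
  then have le: "\<lfloor>s / \<epsilon>\<rfloor> \<le> \<lfloor>(s + h) / \<epsilon>\<rfloor>" by (rule floor_mono)
  moreover have nonneg: "0 \<le> \<lfloor>s / \<epsilon>\<rfloor>" using s \<epsilon> by simp
  ultimately show "nat \<lfloor>(s + h) / \<epsilon>\<rfloor> = nat \<lfloor>s / \<epsilon>\<rfloor> + k" unfolding k_def by linarith
  have "0 \<le> \<lfloor>(s + h) / \<epsilon>\<rfloor>" using le nonneg by linarith
  with le nonneg have "real k = real_of_int \<lfloor>(s + h) / \<epsilon>\<rfloor> - real_of_int \<lfloor>s / \<epsilon>\<rfloor>"
    unfolding k_def by (simp add: of_nat_diff)
  moreover have "(s + h) / \<epsilon> - s / \<epsilon> = h / \<epsilon>" by (simp add: diff_divide_distrib[symmetric])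
  ultimately have "h / \<epsilon> - 1 \<le> real k" "real k \<le> h / \<epsilon> + 1"
    using floor_correct[of "(s + h) / \<epsilon>"] floor_correct[of "s / \<epsilon>"] by linarith+
  then show "h - \<epsilon> \<le> real k * \<epsilon>" "real k * \<epsilon> \<le> h + \<epsilon>"
    using \<epsilon> by (simp_all add: field_simps)
qed

locale descent_setting =
  fixes \<Omega> :: "'a::metric_space set" and f l :: "'a \<Rightarrow> real" and c :: real
  assumes compact_UNIV: "compact (UNIV :: 'a set)"
    and open_\<Omega>: "open \<Omega>"
    and cont_f: "continuous_on (closure \<Omega>) f"
    and slope_eq: "\<And>x. x \<in> \<Omega> \<Longrightarrow> local_slope f (closure \<Omega>) x = ereal (l x)"
    and cont_l: "continuous_on \<Omega> l"
    and c_pos: "c > 0"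
    and c_le_l: "\<And>x. x \<in> \<Omega> \<Longrightarrow> c \<le> l x"
begin

text \<open>The factor \<open>1 - \<epsilon>\<close> puts the descent constant strictly below \<open>l\<close> on the ball, as
  \<open>descent_on_sphere_if_slope_gt\<close> requires.\<close>
definition descent_step :: "real \<Rightarrow> 'a \<Rightarrow> 'a" where
  "descent_step \<epsilon> p = (if cball p \<epsilon> \<subseteq> \<Omega>
     then SOME q. dist p q = \<epsilon> \<and> (1 - \<epsilon>) * Inf (l ` cball p \<epsilon>) * \<epsilon> \<le> f p - f q
     else p)"

lemma descent_step_active:
  assumes \<epsilon>: "0 < \<epsilon>" "\<epsilon> < 1" and ball: "cball p \<epsilon> \<subseteq> \<Omega>"
  shows "dist p (descent_step \<epsilon> p) = \<epsilon>"
    and "\<And>a. (\<And>y. y \<in> cball p \<epsilon> \<Longrightarrow> a \<le> l y) \<Longrightarrow> (1 - \<epsilon>) * a * \<epsilon> \<le> f p - f (descent_step \<epsilon> p)"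
proof -
  define m where "m = Inf (l ` cball p \<epsilon>)"
  have nonempty: "l ` cball p \<epsilon> \<noteq> {}" using \<epsilon> by auto
  have m_le: "m \<le> l y" if "y \<in> cball p \<epsilon>" for y
    unfolding m_def using that ball c_le_l by (intro cInf_lower bdd_belowI2[of _ c]) auto
  have le_m: "a \<le> m" if "\<And>y. y \<in> cball p \<epsilon> \<Longrightarrow> a \<le> l y" for a
    unfolding m_def using that nonempty by (intro cInf_greatest) auto
  have "c \<le> m" using le_m c_le_l ball by blast
  have "\<exists>q. dist p q = \<epsilon> \<and> (1 - \<epsilon>) * m * \<epsilon> \<le> f p - f q"
  proof (rule descent_on_sphere_if_slope_gt[OF cont_f \<epsilon>(1)])
    show "cball p \<epsilon> \<subseteq> closure \<Omega>" using ball closure_subset by blast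
    show "compact (cball p \<epsilon>)"
      using compact_UNIV by (simp add: closed_Int_compact[of "cball p \<epsilon>" UNIV, simplified])
    show "0 \<le> (1 - \<epsilon>) * m" using \<epsilon> \<open>c \<le> m\<close> c_pos by simp
    fix y assume y: "y \<in> cball p \<epsilon>"
    have "(1 - \<epsilon>) * m < m" using \<epsilon> \<open>c \<le> m\<close> c_pos by simp
    with m_le[OF y] y ball show "ereal ((1 - \<epsilon>) * m) < local_slope f (closure \<Omega>) y"
      by (subst slope_eq) auto
  qed
  then have q: "dist p (descent_step \<epsilon> p) = \<epsilon> \<and> (1 - \<epsilon>) * m * \<epsilon> \<le> f p - f (descent_step \<epsilon> p)"
    unfolding descent_step_def m_def using ball by (simp only: if_True) (rule someI_ex)
  then show "dist p (descent_step \<epsilon> p) = \<epsilon>" ..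
  fix a assume "\<And>y. y \<in> cball p \<epsilon> \<Longrightarrow> a \<le> l y"
  then have "(1 - \<epsilon>) * a * \<epsilon> \<le> (1 - \<epsilon>) * m * \<epsilon>"
    using le_m \<epsilon> by (intro mult_right_mono mult_left_mono) auto
  with q show "(1 - \<epsilon>) * a * \<epsilon> \<le> f p - f (descent_step \<epsilon> p)" by linarith
qed

lemma descent_step_in: "0 < \<epsilon> \<Longrightarrow> \<epsilon> < 1 \<Longrightarrow> p \<in> \<Omega> \<Longrightarrow> descent_step \<epsilon> p \<in> \<Omega>"
  using descent_step_active(1)[of \<epsilon> p] by (force simp: descent_step_def)

lemma dist_descent_step_le: "0 < \<epsilon> \<Longrightarrow> \<epsilon> < 1 \<Longrightarrow> dist p (descent_step \<epsilon> p) \<le> \<epsilon>"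
  using descent_step_active(1)[of \<epsilon> p] by (cases "cball p \<epsilon> \<subseteq> \<Omega>") (auto simp: descent_step_def)

definition descent_seq :: "real \<Rightarrow> 'a \<Rightarrow> nat \<Rightarrow> 'a" where
  "descent_seq \<epsilon> x i = (descent_step \<epsilon> ^^ i) x"

lemma descent_seq_simps:
  "descent_seq \<epsilon> x 0 = x" "descent_seq \<epsilon> x (Suc i) = descent_step \<epsilon> (descent_seq \<epsilon> x i)"
  by (simp_all add: descent_seq_def)

lemma descent_seq_stuck:
  "\<not> cball (descent_seq \<epsilon> x i) \<epsilon> \<subseteq> \<Omega> \<Longrightarrow> descent_seq \<epsilon> x (i + k) = descent_seq \<epsilon> x i"
  by (induction k) (simp_all add: descent_seq_simps descent_step_def)

context
  fixes \<epsilon> :: real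
  assumes \<epsilon>: "0 < \<epsilon>" "\<epsilon> < 1"
begin

lemma descent_seq_in: "x \<in> \<Omega> \<Longrightarrow> descent_seq \<epsilon> x i \<in> \<Omega>"
  by (induction i) (simp_all add: descent_seq_simps descent_step_in[OF \<epsilon>])

lemma dist_descent_seq: "dist (descent_seq \<epsilon> x i) (descent_seq \<epsilon> x (i + k)) \<le> real k * \<epsilon>"
proof (induction k)
  case (Suc k)
  have "dist (descent_seq \<epsilon> x (i + k)) (descent_seq \<epsilon> x (i + Suc k)) \<le> \<epsilon>"
    by (simp add: descent_seq_simps dist_descent_step_le[OF \<epsilon>])
  with Suc dist_triangle[of "descent_seq \<epsilon> x i" "descent_seq \<epsilon> x (i + Suc k)" "descent_seq \<epsilon> x (i + k)"]
  show ?case by (simp add: algebra_simps)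
qed simp

lemma descent_seq_decrease:
  assumes "\<And>j. j < k \<Longrightarrow> cball (descent_seq \<epsilon> x (i + j)) \<epsilon> \<subseteq> \<Omega>"
    and "\<And>j y. j < k \<Longrightarrow> y \<in> cball (descent_seq \<epsilon> x (i + j)) \<epsilon> \<Longrightarrow> a \<le> l y"
  shows "real k * ((1 - \<epsilon>) * a * \<epsilon>) \<le> f (descent_seq \<epsilon> x i) - f (descent_seq \<epsilon> x (i + k))"
  using assms
proof (induction k)
  case (Suc k)
  have "real k * ((1 - \<epsilon>) * a * \<epsilon>) \<le> f (descent_seq \<epsilon> x i) - f (descent_seq \<epsilon> x (i + k))"
    using Suc.IH[OF Suc.prems(1)[OF less_SucI] Suc.prems(2)[OF less_SucI]] .
  moreover have "(1 - \<epsilon>) * a * \<epsilon> \<le> f (descent_seq \<epsilon> x (i + k)) - f (descent_seq \<epsilon> x (i + Suc k))"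
    using descent_step_active(2)[OF \<epsilon> Suc.prems(1)[of k]] Suc.prems(2)[of k]
    by (simp add: descent_seq_simps)
  ultimately show ?case by (simp add: algebra_simps)
qed simp

lemma descent_seq_decrease_inside:
  assumes inside: "cball (descent_seq \<epsilon> x N) \<epsilon> \<subseteq> \<Omega>"
  shows "real (N + 1) * ((1 - \<epsilon>) * c * \<epsilon>) \<le> f x - f (descent_seq \<epsilon> x (N + 1))"
proof -
  have active: "cball (descent_seq \<epsilon> x (0 + j)) \<epsilon> \<subseteq> \<Omega>" if "j < N + 1" for j
  proof (rule ccontr)
    assume "\<not> cball (descent_seq \<epsilon> x (0 + j)) \<epsilon> \<subseteq> \<Omega>"
    moreover from this have "descent_seq \<epsilon> x (j + (N - j)) = descent_seq \<epsilon> x j"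
      by (intro descent_seq_stuck) simp
    ultimately show False using inside that by simp
  qed
  moreover have "c \<le> l y" if "j < N + 1" "y \<in> cball (descent_seq \<epsilon> x (0 + j)) \<epsilon>" for j y
    using active that c_le_l by blast
  ultimately have "real (N + 1) * ((1 - \<epsilon>) * c * \<epsilon>)
      \<le> f (descent_seq \<epsilon> x 0) - f (descent_seq \<epsilon> x (0 + (N + 1)))"
    by (rule descent_seq_decrease)
  then show ?thesis by (simp add: descent_seq_simps)
qed

end

text \<open>Each step has length at most \<open>\<epsilon>\<close> and takes time \<open>\<epsilon>\<close>, so this curve is 1-Lipschitz up to an
  error \<open>\<epsilon>\<close>.\<close>
definition descent_curve :: "real \<Rightarrow> 'a \<Rightarrow> real \<Rightarrow> 'a" where
  "descent_curve \<epsilon> x s = descent_seq \<epsilon> x (nat \<lfloor>s / \<epsilon>\<rfloor>)"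

lemma descent_curve_0: "descent_curve \<epsilon> x 0 = x"
  by (simp add: descent_curve_def descent_seq_simps)

context
  fixes \<epsilon> :: real
  assumes \<epsilon>: "0 < \<epsilon>" "\<epsilon> < 1"
begin

lemma descent_curve_in: "x \<in> \<Omega> \<Longrightarrow> descent_curve \<epsilon> x s \<in> \<Omega>"
  by (simp add: descent_curve_def descent_seq_in[OF \<epsilon>])

lemma dist_descent_curve:
  assumes "0 \<le> s" "0 \<le> t"
  shows "dist (descent_curve \<epsilon> x s) (descent_curve \<epsilon> x t) \<le> \<bar>s - t\<bar> + \<epsilon>"
proof -
  have dist_seq: "dist (descent_seq \<epsilon> x i) (descent_seq \<epsilon> x j) \<le> \<bar>real i - real j\<bar> * \<epsilon>" for i j
    using dist_descent_seq[OF \<epsilon>, of x i "j - i"] dist_descent_seq[OF \<epsilon>, of x j "i - j"]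
    by (cases "i \<le> j") (simp_all add: of_nat_diff dist_commute)
  have "real (nat \<lfloor>s / \<epsilon>\<rfloor>) = real_of_int \<lfloor>s / \<epsilon>\<rfloor>" "real (nat \<lfloor>t / \<epsilon>\<rfloor>) = real_of_int \<lfloor>t / \<epsilon>\<rfloor>"
    using assms \<epsilon> by simp_all
  moreover have "\<bar>real_of_int \<lfloor>s / \<epsilon>\<rfloor> - real_of_int \<lfloor>t / \<epsilon>\<rfloor>\<bar> \<le> \<bar>s / \<epsilon> - t / \<epsilon>\<bar> + 1"
    using floor_correct[of "s / \<epsilon>"] floor_correct[of "t / \<epsilon>"] by linarith
  ultimately have "\<bar>real (nat \<lfloor>s / \<epsilon>\<rfloor>) - real (nat \<lfloor>t / \<epsilon>\<rfloor>)\<bar> \<le> \<bar>s / \<epsilon> - t / \<epsilon>\<bar> + 1"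
    by simp
  then have "\<bar>real (nat \<lfloor>s / \<epsilon>\<rfloor>) - real (nat \<lfloor>t / \<epsilon>\<rfloor>)\<bar> * \<epsilon> \<le> (\<bar>s / \<epsilon> - t / \<epsilon>\<bar> + 1) * \<epsilon>"
    using \<epsilon> by (intro mult_right_mono) auto
  also have "\<dots> = \<bar>s - t\<bar> + \<epsilon>"
    using \<epsilon> by (simp add: distrib_right abs_mult[symmetric] diff_divide_distrib[symmetric])
  finally show ?thesis using dist_seq unfolding descent_curve_def by (meson order_trans)
qed

lemma descent_curve_decrease:
  assumes s: "0 \<le> s" and h: "0 \<le> h" and a: "0 \<le> a"
    and ball: "cball (descent_curve \<epsilon> x s) (h + \<epsilon>) \<subseteq> \<Omega>"
    and a_le: "\<And>y. y \<in> cball (descent_curve \<epsilon> x s) (h + \<epsilon>) \<Longrightarrow> a \<le> l y"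
  shows "(h - \<epsilon>) * (1 - \<epsilon>) * a \<le> f (descent_curve \<epsilon> x s) - f (descent_curve \<epsilon> x (s + h))"
proof -
  define i where "i = nat \<lfloor>s / \<epsilon>\<rfloor>"
  obtain k where k: "nat \<lfloor>(s + h) / \<epsilon>\<rfloor> = i + k"
    and k_lower: "h - \<epsilon> \<le> real k * \<epsilon>" and k_upper: "real k * \<epsilon> \<le> h + \<epsilon>"
    using nat_floor_divide_add[OF s h \<epsilon>(1)] unfolding i_def by blast
  have step_balls: "cball (descent_seq \<epsilon> x (i + j)) \<epsilon> \<subseteq> cball (descent_curve \<epsilon> x s) (h + \<epsilon>)"
    if "j < k" for j
  proof
    fix y assume "y \<in> cball (descent_seq \<epsilon> x (i + j)) \<epsilon>"
    moreover have "dist (descent_seq \<epsilon> x i) (descent_seq \<epsilon> x (i + j)) \<le> real j * \<epsilon>"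
      by (rule dist_descent_seq[OF \<epsilon>])
    moreover have "real (Suc j) * \<epsilon> \<le> real k * \<epsilon>" using that \<epsilon> by (intro mult_right_mono) auto
    then have "real j * \<epsilon> + \<epsilon> \<le> h + \<epsilon>" using k_upper by (simp add: algebra_simps)
    ultimately show "y \<in> cball (descent_curve \<epsilon> x s) (h + \<epsilon>)"
      using dist_triangle[of "descent_seq \<epsilon> x i" y "descent_seq \<epsilon> x (i + j)"]
      by (simp add: descent_curve_def i_def)
  qed
  have "real k * ((1 - \<epsilon>) * a * \<epsilon>) \<le> f (descent_curve \<epsilon> x s) - f (descent_curve \<epsilon> x (s + h))"
    unfolding descent_curve_def k i_def[symmetric]
    using step_balls ball a_le by (intro descent_seq_decrease[OF \<epsilon>]) blast+
  moreover have "(h - \<epsilon>) * ((1 - \<epsilon>) * a) \<le> (real k * \<epsilon>) * ((1 - \<epsilon>) * a)"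
    using k_lower \<epsilon> a by (intro mult_right_mono) auto
  ultimately show ?thesis by (simp add: algebra_simps)
qed

end

lemma descent_curve_exits:
  obtains L where "0 \<le> L"
    and "\<And>\<epsilon> x. 0 < \<epsilon> \<Longrightarrow> \<epsilon> \<le> 1/2 \<Longrightarrow> x \<in> \<Omega> \<Longrightarrow> \<not> cball (descent_curve \<epsilon> x L) \<epsilon> \<subseteq> \<Omega>"
proof -
  have "compact (closure \<Omega>)"
    using compact_UNIV by (simp add: closed_Int_compact[of "closure \<Omega>" UNIV, simplified])
  then have "bounded (f ` closure \<Omega>)" by (intro compact_imp_bounded compact_continuous_image cont_f)
  then obtain M where "M > 0" and M: "\<And>y. y \<in> closure \<Omega> \<Longrightarrow> \<bar>f y\<bar> \<le> M"
    unfolding bounded_pos by auto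
  define L where "L = 4 * M / c + 1"
  have "0 \<le> L" using \<open>M > 0\<close> c_pos by (simp add: L_def)
  moreover have "\<not> cball (descent_curve \<epsilon> x L) \<epsilon> \<subseteq> \<Omega>"
    if \<epsilon>: "0 < \<epsilon>" "\<epsilon> \<le> 1/2" and x: "x \<in> \<Omega>" for \<epsilon> x
  proof
    have \<epsilon>': "0 < \<epsilon>" "\<epsilon> < 1" using \<epsilon> by simp_all
    define N where "N = nat \<lfloor>L / \<epsilon>\<rfloor>"
    assume "cball (descent_curve \<epsilon> x L) \<epsilon> \<subseteq> \<Omega>"
    then have "real (N + 1) * ((1 - \<epsilon>) * c * \<epsilon>) \<le> f x - f (descent_seq \<epsilon> x (N + 1))"
      unfolding descent_curve_def N_def[symmetric] by (rule descent_seq_decrease_inside[OF \<epsilon>'])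
    also have "\<dots> \<le> 2 * M"
    proof -
      have "\<bar>f x\<bar> \<le> M" "\<bar>f (descent_seq \<epsilon> x (N + 1))\<bar> \<le> M"
        using M closure_subset x descent_seq_in[OF \<epsilon>' x] by auto
      then show ?thesis by linarith
    qed
    finally have "(real (N + 1) * \<epsilon>) * ((1 - \<epsilon>) * c) \<le> 2 * M" by (simp add: algebra_simps)
    moreover have "L \<le> real (N + 1) * \<epsilon>"
    proof -
      have "L / \<epsilon> \<le> real (N + 1)" unfolding N_def by linarith
      with \<epsilon> show ?thesis by (simp add: field_simps)
    qed
    moreover have "c / 2 \<le> (1 - \<epsilon>) * c" using \<epsilon> c_pos by (simp add: field_simps)
    then have "L * (c / 2) \<le> (real (N + 1) * \<epsilon>) * ((1 - \<epsilon>) * c)"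
      using \<open>L \<le> real (N + 1) * \<epsilon>\<close> \<epsilon> c_pos by (intro mult_mono) auto
    ultimately have "L * (c / 2) \<le> 2 * M" by linarith
    moreover have "L * (c / 2) = 2 * M + c / 2" using c_pos by (simp add: L_def field_simps)
    ultimately show False using c_pos by linarith
  qed
  ultimately show thesis by (rule that)
qed

end

section \<open>The limit curve\<close>

locale descent_limit = descent_setting +
  fixes x :: 'a and \<gamma> :: "real \<Rightarrow> 'a"
  assumes x_in: "x \<in> \<Omega>"
    and cluster: "\<And>F \<delta>. finite F \<Longrightarrow> \<delta> > 0 \<Longrightarrow>
      \<exists>\<^sub>F n in sequentially. \<forall>t\<in>F. dist (descent_curve (mesh n) x t) (\<gamma> t) < \<delta>"
begin

abbreviation approx :: "nat \<Rightarrow> real \<Rightarrow> 'a" where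
  "approx n \<equiv> descent_curve (mesh n) x"

lemma approx_close:
  assumes "\<delta> > 0"
  shows "\<exists>n. mesh n < \<delta> \<and> dist (approx n s) (\<gamma> s) < \<delta> \<and> dist (approx n t) (\<gamma> t) < \<delta>"
proof -
  have "\<exists>\<^sub>F n in sequentially. \<forall>u\<in>{s, t}. dist (approx n u) (\<gamma> u) < \<delta>"
    using assms by (intro cluster) auto
  then have "\<exists>\<^sub>F n in sequentially. (\<forall>u\<in>{s, t}. dist (approx n u) (\<gamma> u) < \<delta>) \<and> mesh n < \<delta>"
    using eventually_mesh_less[OF assms] by (rule frequently_eventually_frequently)
  then obtain n where "\<forall>u\<in>{s, t}. dist (approx n u) (\<gamma> u) < \<delta>" "mesh n < \<delta>"
    using frequently_ex by blast
  then show ?thesis by auto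
qed

lemma limit_start: "\<gamma> 0 = x"
proof (rule ccontr)
  assume "\<gamma> 0 \<noteq> x"
  then obtain n where "dist (approx n 0) (\<gamma> 0) < dist x (\<gamma> 0)"
    using approx_close[of "dist x (\<gamma> 0)" 0 0] by auto
  then show False by (simp add: descent_curve_0)
qed

lemma limit_lipschitz:
  assumes "0 \<le> s" "0 \<le> t"
  shows "dist (\<gamma> s) (\<gamma> t) \<le> \<bar>s - t\<bar>"
proof (rule field_le_epsilon)
  fix e :: real assume "0 < e"
  then obtain n where n: "mesh n < e/3" "dist (approx n s) (\<gamma> s) < e/3" "dist (approx n t) (\<gamma> t) < e/3"
    using approx_close[of "e/3" s t] by auto
  have "dist (\<gamma> s) (\<gamma> t) \<le> dist (approx n s) (\<gamma> s) + dist (approx n s) (approx n t) + dist (approx n t) (\<gamma> t)"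
    using dist_triangle[of "\<gamma> s" "\<gamma> t" "approx n s"] dist_triangle[of "approx n s" "\<gamma> t" "approx n t"]
    by (simp add: dist_commute)
  moreover have "dist (approx n s) (approx n t) \<le> \<bar>s - t\<bar> + mesh n"
    using dist_descent_curve[OF mesh_pos mesh_less_1 assms] .
  ultimately show "dist (\<gamma> s) (\<gamma> t) \<le> \<bar>s - t\<bar> + e" using n by linarith
qed

lemma limit_in_closure: "\<gamma> s \<in> closure \<Omega>"
  unfolding closure_approachable
proof (intro allI impI)
  fix \<delta> :: real assume "\<delta> > 0"
  then obtain n where "dist (approx n s) (\<gamma> s) < \<delta>" using approx_close[of \<delta> s s] by auto
  then show "\<exists>y\<in>\<Omega>. dist y (\<gamma> s) < \<delta>" using descent_curve_in[OF mesh_pos mesh_less_1 x_in] by blast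
qed

lemma limit_exits:
  obtains L where "0 \<le> L" "\<gamma> L \<notin> \<Omega>"
proof -
  obtain L where "0 \<le> L"
    and exits_all: "\<And>\<epsilon> y. 0 < \<epsilon> \<Longrightarrow> \<epsilon> \<le> 1/2 \<Longrightarrow> y \<in> \<Omega> \<Longrightarrow> \<not> cball (descent_curve \<epsilon> y L) \<epsilon> \<subseteq> \<Omega>"
    using descent_curve_exits by blast
  have exits: "\<not> cball (approx n L) (mesh n) \<subseteq> \<Omega>" for n
    by (rule exits_all[OF mesh_pos mesh_le_half x_in])
  moreover have "\<gamma> L \<notin> \<Omega>"
  proof
    assume "\<gamma> L \<in> \<Omega>"
    then obtain r where "r > 0" "ball (\<gamma> L) r \<subseteq> \<Omega>" using open_\<Omega> open_contains_ball by blast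
    obtain n where "mesh n < r/2" and close: "dist (approx n L) (\<gamma> L) < r/2"
      using approx_close[of "r/2" L L] \<open>r > 0\<close> by auto
    from exits[of n] obtain y where "y \<notin> \<Omega>" "y \<in> cball (approx n L) (mesh n)"
      by blast
    then have "dist (approx n L) y \<le> mesh n" by simp
    have "dist (\<gamma> L) y \<le> dist (approx n L) (\<gamma> L) + dist (approx n L) y"
      using dist_triangle[of "\<gamma> L" y "approx n L"] by (simp add: dist_commute)
    with close \<open>mesh n < r/2\<close> \<open>dist (approx n L) y \<le> mesh n\<close> have "y \<in> ball (\<gamma> L) r"
      by simp
    with \<open>ball (\<gamma> L) r \<subseteq> \<Omega>\<close> \<open>y \<notin> \<Omega>\<close> show False by blast
  qed
  ultimately show thesis using that \<open>0 \<le> L\<close> by blast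
qed

lemma approx_decrease:
  assumes s: "0 \<le> s" and h: "0 \<le> h" and a: "0 \<le> a"
    and ball: "ball (\<gamma> s) \<rho> \<subseteq> \<Omega>" and a_le: "\<And>y. y \<in> ball (\<gamma> s) \<rho> \<Longrightarrow> a \<le> l y"
    and close: "dist (approx n s) (\<gamma> s) + h + mesh n < \<rho>"
  shows "h * a - mesh n * ((h + 1) * a) \<le> f (approx n s) - f (approx n (s + h))"
proof -
  have near: "cball (approx n s) (h + mesh n) \<subseteq> ball (\<gamma> s) \<rho>"
  proof
    fix y assume "y \<in> cball (approx n s) (h + mesh n)"
    with close dist_triangle[of "\<gamma> s" y "approx n s"] show "y \<in> ball (\<gamma> s) \<rho>"
      by (simp add: dist_commute)
  qed
  have "cball (approx n s) (h + mesh n) \<subseteq> \<Omega>" using near ball by (rule order_trans)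
  moreover have "a \<le> l y" if "y \<in> cball (approx n s) (h + mesh n)" for y
    using that near a_le by blast
  ultimately have "(h - mesh n) * (1 - mesh n) * a \<le> f (approx n s) - f (approx n (s + h))"
    by (rule descent_curve_decrease[OF mesh_pos mesh_less_1 s h a])
  moreover have "(h - mesh n) * (1 - mesh n) * a = h * a - mesh n * ((h + 1) * a) + mesh n * mesh n * a"
    by (simp add: algebra_simps)
  moreover have "0 \<le> mesh n * mesh n * a" using a by simp
  ultimately show ?thesis by linarith
qed

lemma limit_decrease:
  assumes s: "0 \<le> s" and h: "0 \<le> h" "h < \<rho>" and a: "0 \<le> a"
    and ball: "ball (\<gamma> s) \<rho> \<subseteq> \<Omega>" and a_le: "\<And>y. y \<in> ball (\<gamma> s) \<rho> \<Longrightarrow> a \<le> l y"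
  shows "h * a \<le> f (\<gamma> s) - f (\<gamma> (s + h))"
proof (rule field_le_epsilon)
  fix e :: real assume "0 < e"
  then have "e/3 > 0" by simp
  then obtain \<theta>1 where "\<theta>1 > 0" and \<theta>1: "\<forall>y\<in>closure \<Omega>. dist y (\<gamma> s) < \<theta>1 \<longrightarrow> dist (f y) (f (\<gamma> s)) < e/3"
    using cont_f limit_in_closure[of s] unfolding continuous_on_iff by blast
  from \<open>e/3 > 0\<close> obtain \<theta>2 where "\<theta>2 > 0"
    and \<theta>2: "\<forall>y\<in>closure \<Omega>. dist y (\<gamma> (s + h)) < \<theta>2 \<longrightarrow> dist (f y) (f (\<gamma> (s + h))) < e/3"
    using cont_f limit_in_closure[of "s + h"] unfolding continuous_on_iff by blast
  define K where "K = (h + 1) * a + 1"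
  have "K > 0" using h a by (simp add: K_def add_nonneg_pos)
  define \<theta> where "\<theta> = min (min \<theta>1 \<theta>2) (min ((\<rho> - h) / 2) (e / (3 * K)))"
  have "\<theta> > 0" using \<open>\<theta>1 > 0\<close> \<open>\<theta>2 > 0\<close> h \<open>0 < e\<close> \<open>K > 0\<close> by (simp add: \<theta>_def)
  have \<theta>_le: "\<theta> \<le> \<theta>1" "\<theta> \<le> \<theta>2" "\<theta> \<le> (\<rho> - h) / 2" "\<theta> \<le> e / (3 * K)"
    unfolding \<theta>_def by (meson min.cobounded1 min.cobounded2 order_trans)+
  obtain n where n: "mesh n < \<theta>" "dist (approx n s) (\<gamma> s) < \<theta>" "dist (approx n (s + h)) (\<gamma> (s + h)) < \<theta>"
    using approx_close[OF \<open>\<theta> > 0\<close>, of s "s + h"] by blast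
  have "2 * \<theta> \<le> \<rho> - h" using \<theta>_le(3) by simp
  with n have "dist (approx n s) (\<gamma> s) + h + mesh n < \<rho>" by linarith
  with s h(1) a ball a_le have "h * a - mesh n * ((h + 1) * a) \<le> f (approx n s) - f (approx n (s + h))"
    by (rule approx_decrease)
  moreover have "mesh n * ((h + 1) * a) \<le> e/3"
  proof -
    have "mesh n * ((h + 1) * a) \<le> \<theta> * K"
      using n(1) mesh_pos[of n] h a \<open>\<theta> > 0\<close> by (intro mult_mono) (auto simp: K_def)
    also have "\<dots> \<le> e / (3 * K) * K" using \<open>K > 0\<close> \<theta>_le by (intro mult_right_mono) auto
    finally show ?thesis using \<open>K > 0\<close> by simp
  qed
  moreover have "approx n t \<in> closure \<Omega>" for t
    using descent_curve_in[OF mesh_pos mesh_less_1 x_in] closure_subset by blast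
  then have "dist (f (approx n s)) (f (\<gamma> s)) < e/3" "dist (f (approx n (s + h))) (f (\<gamma> (s + h))) < e/3"
    using \<theta>1 \<theta>2 n(2,3) \<theta>_le by auto
  ultimately show "h * a \<le> f (\<gamma> s) - f (\<gamma> (s + h)) + e"
    unfolding dist_real_def by linarith
qed

lemma limit_descent_rate:
  assumes s: "0 \<le> s" "\<gamma> s \<in> \<Omega>" and "\<eta> > 0"
  shows "\<exists>\<rho>>0. \<forall>h. 0 < h \<longrightarrow> h < \<rho> \<longrightarrow> h * (l (\<gamma> s) - \<eta>) \<le> f (\<gamma> s) - f (\<gamma> (s + h))"
proof -
  define \<eta>' where "\<eta>' = min \<eta> (l (\<gamma> s))"
  have "\<eta>' > 0" using \<open>\<eta> > 0\<close> c_pos c_le_l[OF s(2)] by (simp add: \<eta>'_def)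
  obtain r where "r > 0" "ball (\<gamma> s) r \<subseteq> \<Omega>" using open_\<Omega> s(2) open_contains_ball by blast
  obtain d where "d > 0" and d: "\<forall>y\<in>\<Omega>. dist y (\<gamma> s) < d \<longrightarrow> dist (l y) (l (\<gamma> s)) < \<eta>'"
    using cont_l s(2) \<open>\<eta>' > 0\<close> unfolding continuous_on_iff by blast
  define \<rho> where "\<rho> = min r d"
  have ball: "ball (\<gamma> s) \<rho> \<subseteq> \<Omega>" using \<open>ball (\<gamma> s) r \<subseteq> \<Omega>\<close> by (auto simp: \<rho>_def)
  have low: "l (\<gamma> s) - \<eta>' \<le> l y" if "y \<in> ball (\<gamma> s) \<rho>" for y
    using d that ball by (force simp: \<rho>_def dist_commute dist_real_def)
  show ?thesis
  proof (intro exI[of _ \<rho>] conjI allI impI)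
    show "0 < \<rho>" using \<open>r > 0\<close> \<open>d > 0\<close> by (simp add: \<rho>_def)
    fix h assume h: "0 < h" "h < \<rho>"
    then have "h * (l (\<gamma> s) - \<eta>) \<le> h * (l (\<gamma> s) - \<eta>')" by (intro mult_left_mono) (auto simp: \<eta>'_def)
    also have "\<dots> \<le> f (\<gamma> s) - f (\<gamma> (s + h))"
      using h ball low by (intro limit_decrease[OF s(1)]) (auto simp: \<eta>'_def)
    finally show "h * (l (\<gamma> s) - \<eta>) \<le> f (\<gamma> s) - f (\<gamma> (s + h))" .
  qed
qed

end

lemma (in descent_setting) exists_optimal_curve:
  assumes "x \<in> \<Omega>"
  shows "\<exists>(T, \<gamma>)\<in>admissible_curves \<Omega> x. curve_cost l f T \<gamma> \<le> ereal (f x)"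
proof -
  obtain \<gamma> where cluster: "\<forall>F \<delta>. finite F \<longrightarrow> \<delta> > 0 \<longrightarrow>
      (\<exists>\<^sub>F n in sequentially. \<forall>t\<in>F. dist (descent_curve (mesh n) x t) (\<gamma> t) < \<delta>)"
    using compact_imp_pointwise_cluster_point[OF compact_UNIV, of "\<lambda>n. descent_curve (mesh n) x"]
    by blast
  interpret descent_limit \<Omega> f l c x \<gamma>
    using descent_setting_axioms assms cluster
    by (intro descent_limit.intro descent_limit_axioms.intro) auto
  obtain L where "0 \<le> L" "\<gamma> L \<notin> \<Omega>" by (rule limit_exits)
  have lip: "1-lipschitz_on {0..T} \<gamma>" for T
    using limit_lipschitz by (intro lipschitz_onI) (auto simp: dist_real_def)
  then obtain T where T: "T \<in> {0<..L}" "\<gamma> T \<notin> \<Omega>" "\<gamma> ` {0..<T} \<subseteq> \<Omega>"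
    using first_exit_time[OF lipschitz_on_continuous_on[OF lip] open_\<Omega> \<open>0 \<le> L\<close>] limit_start assms \<open>\<gamma> L \<notin> \<Omega>\<close>
    by auto
  have adm: "(T, \<gamma>) \<in> admissible_curves \<Omega> x"
    using T lip limit_in_closure limit_start open_\<Omega>
    by (auto simp: admissible_curves_def frontier_def interior_open)
  have "curve_cost l f T \<gamma> \<le> ereal (f x)"
  proof (rule curve_cost_le_if_descent_rate[OF cont_f cont_l _ adm])
    show "0 \<le> l y" if "y \<in> \<Omega>" for y using c_pos c_le_l[OF that] by simp
    fix s \<eta> :: real assume "s \<in> {0..<T}" "\<eta> > 0"
    with T(3) show "\<exists>\<rho>>0. \<forall>h. 0 < h \<longrightarrow> h < \<rho> \<longrightarrow> h * (l (\<gamma> s) - \<eta>) \<le> f (\<gamma> s) - f (\<gamma> (s + h))"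
      by (intro limit_descent_rate) auto
  qed
  with adm show ?thesis by blast
qed

theorem lemma3p1:
  fixes \<Omega> :: "'a::metric_space set" and f l :: "'a \<Rightarrow> real"
  assumes "compact (UNIV :: 'a set)"
    and "open \<Omega>" and "\<Omega> \<noteq> {}"
    and "continuous_on (closure \<Omega>) f"
    and "\<forall>x\<in>\<Omega>. local_slope f (closure \<Omega>) x = ereal (l x)"
    and "continuous_on \<Omega> l"
    and "(INF x\<in>\<Omega>. l x) > 0"
  shows "frontier \<Omega> \<noteq> {} \<and>
    (\<forall>x\<in>\<Omega>. ereal (f x) = (INF (T, \<gamma>)\<in>admissible_curves \<Omega> x. curve_cost l f T \<gamma>)) \<and>
    (\<forall>x\<in>\<Omega>. \<exists>(T, \<gamma>)\<in>admissible_curves \<Omega> x. curve_cost l f T \<gamma> = ereal (f x))"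
proof -
  have "0 \<le> l y" if "y \<in> \<Omega>" for y
    using local_slope_nonneg[of f "closure \<Omega>" y] assms(5) that by auto
  then have "(INF x\<in>\<Omega>. l x) \<le> l y" if "y \<in> \<Omega>" for y
    using that by (intro cINF_lower bdd_belowI2) auto
  with assms interpret descent_setting \<Omega> f l "INF x\<in>\<Omega>. l x" by unfold_locales auto
  have lower: "ereal (f x) \<le> curve_cost l f T \<gamma>" if "(T, \<gamma>) \<in> admissible_curves \<Omega> x" for x T \<gamma>
    using le_curve_cost[OF assms(4-6) that] .
  have optimal: "\<exists>(T, \<gamma>)\<in>admissible_curves \<Omega> x. curve_cost l f T \<gamma> = ereal (f x)" if "x \<in> \<Omega>" for x
    using exists_optimal_curve[OF that] lower by (fastforce intro: antisym)
  have "ereal (f x) = (INF (T, \<gamma>)\<in>admissible_curves \<Omega> x. curve_cost l f T \<gamma>)" if "x \<in> \<Omega>" for x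
    using optimal[OF that] lower by (intro antisym INF_greatest) (auto intro: INF_lower2)
  moreover have "frontier \<Omega> \<noteq> {}"
    using optimal \<open>\<Omega> \<noteq> {}\<close> by (fastforce simp: admissible_curves_def)
  ultimately show ?thesis using optimal by blast
qed

end
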